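(* Let $(X,Y,Z,W)$ be a solution of system (S) on $(-\infty,t_{max})$. Assume $Y,W>0$, $\lim_{t\to-\infty}(X,Y,Z,W)(t)=(0,0,1,0)$, and $\mathcal C>0$. Then $dX(t)+Z(t)\le1$ for all $t\in(-\infty,t_{max})$.
   Context: Fix a positive integer $d$ and $q\in\mathbb R$. Put $A_2=d(d+2)$ and $A_3=\tfrac14d(d+2)^2q^2$. System (S) is $$X'=X(dX^2+Z^2-1)+\tfrac{A_2}{d}Y^2-2\tfrac{A_3}{d}W^2,\qquad Y'=Y(dX^2+Z^2-X),$$ $$Z'=Z(dX^2+Z^2-1)+A_3W^2,\qquad W'=W(dX^2+Z^2-2X+Z).$$ $g$ is a positive solution of $g'=gX$ and $\mathcal L=gY$. The first integral is $dX^2+A_2Y^2+Z^2-A_3W^2=1-\mathcal C\mathcal L^2$ with $\mathcal C$ constant; its sign does not depend on the normalization of $g$. *)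

theory Defs
  imports "HOL-Analysis.Analysis" "HOL-Library.Extended_Real"
begin

definition A2 :: "nat \<Rightarrow> real" where
  "A2 d = real d * (real d + 2)"

definition A3 :: "nat \<Rightarrow> real \<Rightarrow> real" where
  "A3 d q = (1/4) * real d * (real d + 2)^2 * q^2"

definition solves_S :: "nat \<Rightarrow> real \<Rightarrow> real set \<Rightarrow> (real \<Rightarrow> real) \<Rightarrow> (real \<Rightarrow> real)
    \<Rightarrow> (real \<Rightarrow> real) \<Rightarrow> (real \<Rightarrow> real) \<Rightarrow> bool" where
  "solves_S d q I X Y Z W \<longleftrightarrow> (\<forall>t\<in>I.
     (X has_real_derivative
        (X t * (real d * (X t)^2 + (Z t)^2 - 1) + A2 d / real d * (Y t)^2
         - 2 * A3 d q / real d * (W t)^2)) (at t) \<and>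
     (Y has_real_derivative (Y t * (real d * (X t)^2 + (Z t)^2 - X t))) (at t) \<and>
     (Z has_real_derivative
        (Z t * (real d * (X t)^2 + (Z t)^2 - 1) + A3 d q * (W t)^2)) (at t) \<and>
     (W has_real_derivative
        (W t * (real d * (X t)^2 + (Z t)^2 - 2 * X t + Z t))) (at t))"

end

theory Submission
  imports Defs
begin

text \<open>
  Put \<open>F = dX + Z - 1\<close>. By the first integral \<open>F' = F (dX\<^sup>2 + Z\<^sup>2 - 1) - \<C>\<L>\<^sup>2\<close>,
  so \<open>F' < 0\<close> wherever \<open>F = 0\<close> and \<open>{F \<le> 0}\<close> is forward invariant. Near \<open>-\<infinity>\<close> the
  growth rate \<open>r = dX\<^sup>2 + Z\<^sup>2 - 2X + Z\<close> of \<open>W\<close> tends to \<open>2\<close>; weighting \<open>F\<close> by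
  \<open>exp (-A\<^sub>3 W\<^sup>2 / 2)\<close> absorbs the one positive contribution \<open>A\<^sub>3 W\<^sup>2 F\<close> to \<open>F'\<close>, so
  the weighted \<open>F\<close> strictly decreases wherever \<open>F > 0\<close> and \<open>r > 1\<close>. If \<open>F\<close> were
  positive at some early time it would be positive at all earlier times, and the
  weighted \<open>F\<close> could not tend to \<open>0\<close> at \<open>-\<infinity>\<close>.
\<close>

lemma nonpos_forward_invariant:
  fixes \<phi> :: "real \<Rightarrow> real"
  assumes "s \<le> t" and "\<phi> s \<le> 0"
    and deriv: "\<And>x. x \<in> {s..t} \<Longrightarrow> \<exists>D. (\<phi> has_real_derivative D) (at x) \<and> (\<phi> x = 0 \<longrightarrow> D < 0)"
  shows "\<phi> t \<le> 0"
proof (rule ccontr)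
  assume "\<not> \<phi> t \<le> 0"
  hence "\<phi> t > 0" by simp
  have cont: "continuous_on {s..t} \<phi>"
    using deriv by (meson DERIV_isCont continuous_at_imp_continuous_on)
  define S where "S = {x \<in> {s..t}. \<phi> x \<le> 0}"
  have "closed S"
    unfolding S_def using continuous_on_closed_Collect_le[OF cont continuous_on_const] by simp
  moreover have "s \<in> S" "bdd_above S"
    using assms(1,2) by (auto simp: S_def intro: bdd_aboveI[of _ t])
  ultimately have "Sup S \<in> S"
    using closed_contains_Sup by blast
  define u where "u = Sup S"
  have u: "s \<le> u" "u < t" "\<phi> u \<le> 0"
    using \<open>Sup S \<in> S\<close> \<open>\<phi> t > 0\<close> by (auto simp: S_def u_def less_le)
  have pos_after: "\<phi> x > 0" if "u < x" "x \<le> t" for x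
  proof (rule ccontr)
    assume "\<not> \<phi> x > 0"
    hence "x \<in> S" using that u by (auto simp: S_def)
    thus False using cSup_upper[OF _ \<open>bdd_above S\<close>] that by (force simp: u_def)
  qed
  have "\<phi> u = 0"
  proof (rule ccontr)
    assume "\<phi> u \<noteq> 0"
    moreover have "continuous_on {u..t} \<phi>"
      using u by (auto intro: continuous_on_subset[OF cont])
    ultimately obtain z where "u \<le> z" "z \<le> t" "\<phi> z = 0"
      using IVT'[of \<phi> u 0 t] u \<open>\<phi> t > 0\<close> by auto
    thus False using pos_after[of z] \<open>\<phi> u \<noteq> 0\<close> by (cases "z = u") auto
  qed
  then obtain D where "(\<phi> has_real_derivative D) (at u)" "D < 0"
    using deriv[of u] u by auto
  then obtain e where "e > 0" and dec: "\<And>h. 0 < h \<Longrightarrow> h < e \<Longrightarrow> \<phi> (u + h) < \<phi> u"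
    using DERIV_neg_dec_right by blast
  define h where "h = min (e / 2) (t - u)"
  have "0 < h" "h < e" "u + h \<le> t"
    using \<open>e > 0\<close> u by (auto simp: h_def)
  thus False
    using dec[of h] pos_after[of "u + h"] \<open>\<phi> u = 0\<close> by simp
qed

locale S_orbit =
  fixes d :: nat and q :: real and tmax :: ereal
    and X Y Z W g :: "real \<Rightarrow> real" and C :: real
  assumes d_pos: "d > 0"
    and sol: "solves_S d q {t. ereal t < tmax} X Y Z W"
    and Y_pos: "\<And>t. ereal t < tmax \<Longrightarrow> Y t > 0"
    and g_pos: "\<And>t. ereal t < tmax \<Longrightarrow> g t > 0"
    and first_integral: "\<And>t. ereal t < tmax \<Longrightarrow>
       real d * (X t)^2 + A2 d * (Y t)^2 + (Z t)^2 - A3 d q * (W t)^2 = 1 - C * (g t * Y t)^2"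
    and C_pos: "C > 0"
begin

definition excess :: "real \<Rightarrow> real" where
  "excess t = real d * X t + Z t - 1"

definition quad :: "real \<Rightarrow> real" where
  "quad t = real d * (X t)^2 + (Z t)^2"

definition W_rate :: "real \<Rightarrow> real" where
  "W_rate t = quad t - 2 * X t + Z t"

definition weight :: "real \<Rightarrow> real" where
  "weight t = exp (- A3 d q * (W t)^2 / 2)"

definition weighted_excess :: "real \<Rightarrow> real" where
  "weighted_excess t = excess t * weight t"

lemma C_L_sq_pos:
  assumes "ereal t < tmax"
  shows "C * (g t * Y t)^2 > 0"
  using g_pos[OF assms] Y_pos[OF assms] C_pos by simp

lemma quad_minus_one:
  "ereal t < tmax \<Longrightarrow> quad t - 1 = A3 d q * (W t)^2 - A2 d * (Y t)^2 - C * (g t * Y t)^2"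
  using first_integral[of t] by (simp add: quad_def algebra_simps)

lemma excess_deriv:
  assumes t: "ereal t < tmax"
  shows "(excess has_real_derivative excess t * (quad t - 1) - C * (g t * Y t)^2) (at t)"
proof -
  have "(X has_real_derivative
        X t * (quad t - 1) + A2 d / real d * (Y t)^2 - 2 * A3 d q / real d * (W t)^2) (at t)"
    and "(Z has_real_derivative Z t * (quad t - 1) + A3 d q * (W t)^2) (at t)"
    using sol t by (auto simp: solves_S_def quad_def)
  hence "(excess has_real_derivative
      real d * (X t * (quad t - 1) + A2 d / real d * (Y t)^2 - 2 * A3 d q / real d * (W t)^2)
      + (Z t * (quad t - 1) + A3 d q * (W t)^2)) (at t)"
    unfolding excess_def[abs_def] by (auto intro!: derivative_eq_intros)
  moreover have "real d * (X t * (quad t - 1) + A2 d / real d * (Y t)^2 - 2 * A3 d q / real d * (W t)^2)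
      + (Z t * (quad t - 1) + A3 d q * (W t)^2) = excess t * (quad t - 1) - C * (g t * Y t)^2"
    using quad_minus_one[OF t] d_pos by (simp add: excess_def algebra_simps)
  ultimately show ?thesis by simp
qed

lemma excess_nonpos_forward:
  assumes "s \<le> t" "ereal t < tmax" "excess s \<le> 0"
  shows "excess t \<le> 0"
proof (rule nonpos_forward_invariant[where \<phi> = excess, OF assms(1,3)])
  fix x assume "x \<in> {s..t}"
  hence "ereal x < tmax"
    using assms(2) by (meson atLeastAtMost_iff ereal_less_eq(3) le_less_trans)
  thus "\<exists>D. (excess has_real_derivative D) (at x) \<and> (excess x = 0 \<longrightarrow> D < 0)"
    using excess_deriv C_L_sq_pos by fastforce
qed

lemma weighted_excess_deriv:
  assumes t: "ereal t < tmax"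
  shows "(weighted_excess has_real_derivative weight t *
      (excess t * (A3 d q * (W t)^2 * (1 - W_rate t) - A2 d * (Y t)^2 - C * (g t * Y t)^2)
       - C * (g t * Y t)^2)) (at t)"
proof -
  have "(W has_real_derivative W t * W_rate t) (at t)"
    using sol t by (auto simp: solves_S_def W_rate_def quad_def)
  hence "(weight has_real_derivative weight t * (- A3 d q * (W t)^2 * W_rate t)) (at t)"
    unfolding weight_def[abs_def]
    by (auto intro!: derivative_eq_intros simp: power2_eq_square algebra_simps)
  from DERIV_mult[OF excess_deriv[OF t] this] show ?thesis
    unfolding weighted_excess_def[abs_def] using quad_minus_one[OF t]
    by (simp add: algebra_simps)
qed

lemma weighted_excess_deriv_neg:
  assumes "ereal t < tmax" "excess t > 0" "W_rate t \<ge> 1"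
  shows "\<exists>D. (weighted_excess has_real_derivative D) (at t) \<and> D < 0"
proof -
  have "A3 d q * (W t)^2 * (1 - W_rate t) \<le> 0"
    using assms(3) by (simp add: A3_def mult_nonneg_nonpos)
  moreover have "A2 d * (Y t)^2 \<ge> 0"
    by (simp add: A2_def)
  ultimately have "excess t * (A3 d q * (W t)^2 * (1 - W_rate t) - A2 d * (Y t)^2
      - C * (g t * Y t)^2) - C * (g t * Y t)^2 < 0"
    using assms(2) C_L_sq_pos[OF assms(1)] by (smt (verit) mult_pos_neg)
  thus ?thesis
    using weighted_excess_deriv[OF assms(1)] by (auto simp: weight_def mult_pos_neg)
qed

lemma W_rate_eventually_gt_1:
  assumes "(X \<longlongrightarrow> 0) at_bot" "(Z \<longlongrightarrow> 1) at_bot"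
  shows "eventually (\<lambda>t. W_rate t > 1) at_bot"
proof -
  have "(W_rate \<longlongrightarrow> real d * 0\<^sup>2 + 1\<^sup>2 - 2 * 0 + 1) at_bot"
    unfolding W_rate_def[abs_def] quad_def by (intro tendsto_intros assms)
  thus ?thesis by (rule order_tendstoD) simp
qed

lemma weighted_excess_tendsto_0:
  assumes "(X \<longlongrightarrow> 0) at_bot" "(Z \<longlongrightarrow> 1) at_bot" "(W \<longlongrightarrow> 0) at_bot"
  shows "(weighted_excess \<longlongrightarrow> 0) at_bot"
proof -
  have "(weighted_excess \<longlongrightarrow> (real d * 0 + 1 - 1) * exp (- A3 d q * 0\<^sup>2 / 2)) at_bot"
    unfolding weighted_excess_def[abs_def] excess_def weight_def
    by (intro tendsto_intros assms) simp
  thus ?thesis by simp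
qed

lemma excess_nonpos_eventually:
  assumes "tmax \<noteq> -\<infinity>"
    and limX: "(X \<longlongrightarrow> 0) at_bot" and limZ: "(Z \<longlongrightarrow> 1) at_bot" and limW: "(W \<longlongrightarrow> 0) at_bot"
  shows "\<exists>N. \<forall>t\<le>N. excess t \<le> 0"
proof -
  obtain b where "ereal b < tmax"
    using assms(1) ereal_dense2[of "-\<infinity>" tmax] by auto
  hence "eventually (\<lambda>t. ereal t < tmax) at_bot"
    unfolding eventually_at_bot_linorder by (intro exI[of _ b]) (meson ereal_less_eq(3) le_less_trans)
  hence "eventually (\<lambda>t. ereal t < tmax \<and> W_rate t > 1) at_bot"
    using W_rate_eventually_gt_1[OF limX limZ] by (rule eventually_conj)
  then obtain N where N: "\<And>t. t \<le> N \<Longrightarrow> ereal t < tmax \<and> W_rate t > 1"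
    unfolding eventually_at_bot_linorder by blast
  have "excess t0 \<le> 0" if "t0 \<le> N" for t0
  proof (rule ccontr)
    assume "\<not> excess t0 \<le> 0"
    hence pos: "excess t > 0" if "t \<le> t0" for t
      using excess_nonpos_forward[of t t0] N \<open>t0 \<le> N\<close> that by fastforce
    have "weighted_excess t0 < weighted_excess t" if "t < t0" for t
      using \<open>t0 \<le> N\<close>
      by (intro DERIV_neg_imp_decreasing[OF that] weighted_excess_deriv_neg)
        (auto simp: N pos less_imp_le)
    hence "eventually (\<lambda>t. weighted_excess t0 \<le> weighted_excess t) at_bot"
      by (auto simp: eventually_at_bot_linorder intro!: exI[of _ "t0 - 1"] less_imp_le)
    hence "weighted_excess t0 \<le> 0"
      using tendsto_le[OF _ weighted_excess_tendsto_0[OF limX limZ limW] tendsto_const] by simp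
    thus False
      using pos[of t0] by (simp add: weighted_excess_def weight_def mult_le_0_iff)
  qed
  thus ?thesis by blast
qed

end

theorem proposition5p2:
  fixes d :: nat and q :: real and tmax :: ereal
    and X Y Z W g :: "real \<Rightarrow> real" and C :: real
  assumes d_pos: "d > 0"
    and sol: "solves_S d q {t. ereal t < tmax} X Y Z W"
    and Y_pos: "\<forall>t. ereal t < tmax \<longrightarrow> Y t > 0"
    and W_pos: "\<forall>t. ereal t < tmax \<longrightarrow> W t > 0"
    and limX: "(X \<longlongrightarrow> 0) at_bot"
    and limY: "(Y \<longlongrightarrow> 0) at_bot"
    and limZ: "(Z \<longlongrightarrow> 1) at_bot"
    and limW: "(W \<longlongrightarrow> 0) at_bot"
    and g_pos: "\<forall>t. ereal t < tmax \<longrightarrow> g t > 0"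
    and g_deriv: "\<forall>t. ereal t < tmax \<longrightarrow> (g has_real_derivative (g t * X t)) (at t)"
    and first_integral: "\<forall>t. ereal t < tmax \<longrightarrow>
       real d * (X t)^2 + A2 d * (Y t)^2 + (Z t)^2 - A3 d q * (W t)^2
         = 1 - C * (g t * Y t)^2"
    and C_pos: "C > 0"
  shows "\<forall>t. ereal t < tmax \<longrightarrow> real d * X t + Z t \<le> 1"
proof (intro allI impI)
  fix t assume t: "ereal t < tmax"
  interpret S_orbit d q tmax X Y Z W g C
    using assms by unfold_locales auto
  obtain N where "\<forall>s\<le>N. excess s \<le> 0"
    using excess_nonpos_eventually t limX limZ limW by fastforce
  hence "excess t \<le> 0"
    using excess_nonpos_forward[of "min t N" t] t by simp
  thus "real d * X t + Z t \<le> 1"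
    by (simp add: excess_def)
qed

end
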